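(* Let $q$ be a prime power, $\ell\ge1$, $\beta\in\{1,-1\}\subseteq\mathbb{F}_q$ of multiplicative order $r$, assume $q\equiv 1\pmod{r\ell}$, and let $\omega\in\mathbb{F}_q$ be a primitive $r\ell$-th root of unity with $\omega^\ell=\beta$. For $0\le k\le \ell-1$ let $\eta_k(y)=\prod_{0\le j\le\ell-1,\,j\ne k}\frac{y-\omega^{1+jr}}{\omega^{1+kr}-\omega^{1+jr}}$ (a polynomial of degree $\ell-1$), and let $\eta_k^*(y)=y^{\ell-1}\eta_k(1/y)$ be its reciprocal polynomial. Then for each $k=0,1,\dots,\ell-1$ there is a constant $b_k\in\mathbb{F}_q^*$ such that $$\eta_k^*(y)=\begin{cases} b_k\,\eta_{\ell-2-k}(y) & \text{if } \beta=1,\\ b_k\,\eta_{\ell-1-k}(y) & \text{if } \beta=-1,\end{cases}$$ where subscripts are read modulo $\ell$. *)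

theory Defs
  imports "HOL-Computational_Algebra.Polynomial"
begin

definition eta :: "'a::field \<Rightarrow> nat \<Rightarrow> nat \<Rightarrow> nat \<Rightarrow> 'a poly" where
  "eta w r l k = (\<Prod>j\<in>{0..<l} - {k}.
      smult (inverse (w ^ (1 + k * r) - w ^ (1 + j * r))) [:- (w ^ (1 + j * r)), 1:])"

(* reciprocal w.r.t. degree bound n: y^n * p(1/y), written coefficientwise *)
definition recip :: "nat \<Rightarrow> 'a::comm_ring_1 poly \<Rightarrow> 'a poly" where
  "recip n p = (\<Sum>i\<le>n. monom (coeff p i) (n - i))"

definition idx_mod :: "int \<Rightarrow> nat \<Rightarrow> nat" where
  "idx_mod i l = nat (i mod int l)"

end

theory Submission
  imports Defs
begin

(* The nodes x_j = \<omega>^(1 + j r), j < l, are distinct, and when r d = 2 (d = 2 for \<beta> = 1,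
   d = 1 for \<beta> = -1) they are closed under inversion: x_j x_j' = \<omega>^(r (j + j' + d)) = 1
   as soon as j' = -d - j mod l.  Reflecting a product of linear factors y - x_j gives, up to
   the units -x_j, the factors y - 1/x_j; so the reflected Lagrange basis polynomial of the
   node x_k is a nonzero multiple of the Lagrange basis polynomial of the node
   1/x_k = x_(-d-k mod l). *)

definition lagrange_basis :: "('b \<Rightarrow> 'a::field) \<Rightarrow> 'b set \<Rightarrow> 'b \<Rightarrow> 'a poly" where
  "lagrange_basis x A k = (\<Prod>j\<in>A - {k}. smult (inverse (x k - x j)) [:- x j, 1:])"

lemma eta_eq_lagrange_basis: "eta \<omega> r l k = lagrange_basis (\<lambda>j. \<omega> ^ (1 + j * r)) {0..<l} k"
  by (simp add: eta_def lagrange_basis_def)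

lemma lagrange_basis_eq_smult_prod:
  "lagrange_basis x A k =
     smult (\<Prod>j\<in>A - {k}. inverse (x k - x j)) (\<Prod>j\<in>A - {k}. [:- x j, 1:])"
  unfolding lagrange_basis_def by (rule prod_smult)

lemma lagrange_basis_scale_nonzero:
  fixes x :: "'b \<Rightarrow> 'a::field"
  assumes "inj_on x A" "k \<in> A"
  shows "(\<Prod>j\<in>A - {k}. inverse (x k - x j)) \<noteq> 0"
proof (cases "finite A")
  case True
  have "x k \<noteq> x j" if "j \<in> A - {k}" for j
    using assms that by (auto dest: inj_onD)
  with True show ?thesis by simp
qed simp

lemma degree_lagrange_basis:
  assumes "finite A" "inj_on x A" "k \<in> A"
  shows "degree (lagrange_basis x A k) = card A - 1"
proof -
  have "degree (\<Prod>j\<in>A - {k}. [:- x j, 1:]) = (\<Sum>j\<in>A - {k}. degree [:- x j, 1:])"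
    by (rule degree_prod_sum_eq) simp
  then show ?thesis
    using assms lagrange_basis_scale_nonzero[OF assms(2,3)]
    by (simp add: lagrange_basis_eq_smult_prod)
qed

lemma recip_degree_eq_reflect_poly: "recip (degree p) p = reflect_poly p"
proof (rule poly_eqI)
  fix m
  have "coeff (recip (degree p) p) m =
          (\<Sum>i\<le>degree p. if i = degree p - m \<and> m \<le> degree p then coeff p i else 0)"
    unfolding recip_def coeff_sum coeff_monom by (intro sum.cong) auto
  also have "\<dots> = coeff (reflect_poly p) m"
    by (auto simp: coeff_reflect_poly if_distrib cong: if_cong)
  finally show "coeff (recip (degree p) p) m = coeff (reflect_poly p) m" .
qed

lemma reflect_poly_linear:
  "(x::'a::field) \<noteq> 0 \<Longrightarrow> reflect_poly [:- x, 1:] = smult (- x) [:- inverse x, 1:]"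
  by (simp add: reflect_poly_pCons' monom_altdef)

lemma reflect_lagrange_basis_inverse_nodes:
  fixes x :: "'b \<Rightarrow> 'a::field"
  assumes A: "finite A" and x_inj: "inj_on x A" and x_nz: "\<And>j. j \<in> A \<Longrightarrow> x j \<noteq> 0"
    and \<sigma>_into: "\<sigma> ` A \<subseteq> A" and \<sigma>_inverse: "\<And>j. j \<in> A \<Longrightarrow> x (\<sigma> j) = inverse (x j)"
    and k: "k \<in> A"
  shows "\<exists>b. b \<noteq> 0 \<and> reflect_poly (lagrange_basis x A k) = smult b (lagrange_basis x A (\<sigma> k))"
proof -
  define P where "P k = (\<Prod>j\<in>A - {k}. [:- x j, 1:])" for k
  define C where "C k = (\<Prod>j\<in>A - {k}. inverse (x k - x j))" for k
  have \<sigma>_inj: "inj_on \<sigma> A"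
    by (rule inj_onI) (metis \<sigma>_inverse x_inj inj_on_eq_iff inverse_eq_iff_eq)
  have "\<sigma> ` A = A"
    using endo_inj_surj[OF A \<sigma>_into \<sigma>_inj] .
  then have \<sigma>_bij: "bij_betw \<sigma> (A - {k}) (A - {\<sigma> k})"
    using \<sigma>_inj k by (simp add: bij_betw_def inj_on_diff inj_on_image_set_diff)
  have C_nz: "C (\<sigma> k) \<noteq> 0" "C k \<noteq> 0"
    unfolding C_def using lagrange_basis_scale_nonzero[OF x_inj] \<sigma>_into k by auto
  have "reflect_poly (lagrange_basis x A k) =
          smult (C k) (\<Prod>j\<in>A - {k}. smult (- x j) [:- x (\<sigma> j), 1:])"
    using x_nz \<sigma>_inverse
    by (simp add: lagrange_basis_eq_smult_prod C_def reflect_poly_smult reflect_poly_prod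
        reflect_poly_linear)
  also have "\<dots> = smult (C k * (\<Prod>j\<in>A - {k}. - x j)) (\<Prod>j\<in>A - {k}. [:- x (\<sigma> j), 1:])"
    by (simp only: prod_smult smult_smult)
  also have "(\<Prod>j\<in>A - {k}. [:- x (\<sigma> j), 1:]) = P (\<sigma> k)"
    unfolding P_def by (rule prod.reindex_bij_betw[OF \<sigma>_bij])
  also have "P (\<sigma> k) = smult (inverse (C (\<sigma> k))) (lagrange_basis x A (\<sigma> k))"
    using C_nz by (simp add: lagrange_basis_eq_smult_prod P_def C_def)
  finally have "reflect_poly (lagrange_basis x A k) =
      smult (C k * (\<Prod>j\<in>A - {k}. - x j) / C (\<sigma> k)) (lagrange_basis x A (\<sigma> k))"
    by (simp add: field_simps)
  moreover have "C k * (\<Prod>j\<in>A - {k}. - x j) / C (\<sigma> k) \<noteq> 0"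
    using C_nz x_nz A by simp
  ultimately show ?thesis by blast
qed

lemma int_idx_mod: "l > 0 \<Longrightarrow> int (idx_mod i l) = i mod int l"
  by (simp add: idx_mod_def)

lemma idx_mod_less: "l > 0 \<Longrightarrow> idx_mod i l < l"
  by (simp add: idx_mod_def nat_less_iff)

lemma inj_on_power_window:
  fixes \<omega> :: "'a::field"
  assumes \<omega>: "\<omega> \<noteq> 0" and order: "\<forall>m. 0 < m \<and> m < n \<longrightarrow> \<omega> ^ m \<noteq> 1"
  shows "inj_on (\<lambda>i. \<omega> ^ i) {a..<a + n}"
proof -
  have "\<omega> ^ i \<noteq> \<omega> ^ j" if "a \<le> i" "i < j" "j < a + n" for i j
  proof
    assume "\<omega> ^ i = \<omega> ^ j"
    also have "\<omega> ^ j = \<omega> ^ i * \<omega> ^ (j - i)"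
      using that by (metis le_add_diff_inverse less_imp_le power_add)
    finally have "\<omega> ^ (j - i) = 1"
      using \<omega> by simp
    with order that show False by auto
  qed
  then show ?thesis
    by (intro inj_onI) (metis atLeastLessThan_iff linorder_neqE_nat)
qed

lemma inj_on_roots_of_unity_nodes:
  fixes \<omega> :: "'a::field"
  assumes \<omega>: "\<omega> \<noteq> 0" and order: "\<forall>m. 0 < m \<and> m < r * l \<longrightarrow> \<omega> ^ m \<noteq> 1" and r: "r > 0"
  shows "inj_on (\<lambda>j. \<omega> ^ (1 + j * r)) {0..<l}"
proof (rule inj_onI)
  have window: "1 + j * r \<in> {1..<1 + r * l}" if "j \<in> {0..<l}" for j
    using that r by (simp add: mult.commute)
  fix i j assume "i \<in> {0..<l}" "j \<in> {0..<l}" "\<omega> ^ (1 + i * r) = \<omega> ^ (1 + j * r)"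
  then have "1 + i * r = 1 + j * r"
    using inj_onD[OF inj_on_power_window[OF \<omega> order]] window by blast
  then show "i = j" using r by simp
qed

lemma roots_of_unity_node_reflection:
  fixes \<omega> :: "'a::field"
  assumes l: "l > 0" and rd: "r * d = 2" and \<omega>: "\<omega> ^ (r * l) = 1"
  shows "\<omega> ^ (1 + idx_mod (int l - int d - int j) l * r) * \<omega> ^ (1 + j * r) = 1"
proof -
  define j' where "j' = idx_mod (int l - int d - int j) l"
  have "int j' mod int l = (int l - int d - int j) mod int l"
    by (simp add: j'_def int_idx_mod[OF l])
  then have "int l dvd int j' - (int l - int d - int j)"
    by (simp only: mod_eq_dvd_iff)
  then have "int l dvd int j' - (int l - int d - int j) + int l"
    by (rule dvd_add[OF _ dvd_refl])
  also have "int j' - (int l - int d - int j) + int l = int (j' + j + d)"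
    by simp
  finally obtain t where t: "j' + j + d = l * t"
    by (metis dvd_def of_nat_dvd_iff)
  have "(1 + j' * r) + (1 + j * r) = r * (j' + j + d)"
    using rd by (simp add: algebra_simps)
  also have "\<dots> = (r * l) * t"
    by (simp add: t)
  finally have exponent: "(1 + j' * r) + (1 + j * r) = (r * l) * t" .
  have "\<omega> ^ (1 + j' * r) * \<omega> ^ (1 + j * r) = (\<omega> ^ (r * l)) ^ t"
    by (simp only: exponent power_mult flip: power_add)
  then show ?thesis
    using \<omega> by (simp add: j'_def)
qed

lemma recip_eta_eq_smult_eta:
  fixes \<omega> :: "'a::field"
  assumes l: "l \<ge> 1" and rd: "r * d = 2" and \<omega>: "\<omega> ^ (r * l) = 1"
    and order: "\<forall>m. 0 < m \<and> m < r * l \<longrightarrow> \<omega> ^ m \<noteq> 1" and k: "k < l"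
  shows "\<exists>b. b \<noteq> 0 \<and>
           recip (l - 1) (eta \<omega> r l k) = smult b (eta \<omega> r l (idx_mod (int l - int d - int k) l))"
proof -
  define x where "x j = \<omega> ^ (1 + j * r)" for j
  define \<sigma> where "\<sigma> j = idx_mod (int l - int d - int j) l" for j
  have r: "r > 0" using rd by (cases r) auto
  have \<omega>_nz: "\<omega> \<noteq> 0" using \<omega> l r by (cases "\<omega> = 0") (auto simp: power_0_left)
  have x_inj: "inj_on x {0..<l}"
    unfolding x_def by (rule inj_on_roots_of_unity_nodes[OF \<omega>_nz order r])
  have "x (\<sigma> j) * x j = 1" for j
    unfolding x_def \<sigma>_def using l by (intro roots_of_unity_node_reflection[OF _ rd \<omega>]) simp
  then have \<sigma>_inverse: "x (\<sigma> j) = inverse (x j)" for j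
    by (metis inverse_unique mult.commute)
  have \<sigma>_into: "\<sigma> ` {0..<l} \<subseteq> {0..<l}"
    using l by (auto simp: \<sigma>_def idx_mod_less)
  have x_nz: "x j \<noteq> 0" for j
    using \<omega>_nz by (simp add: x_def)
  define L where "L = lagrange_basis x {0..<l}"
  have eta_L: "eta \<omega> r l j = L j" for j
    by (simp add: eta_eq_lagrange_basis L_def x_def[abs_def])
  have "degree (L k) = l - 1"
    using degree_lagrange_basis[OF _ x_inj] k by (simp add: L_def)
  then have "recip (l - 1) (eta \<omega> r l k) = reflect_poly (L k)"
    using recip_degree_eq_reflect_poly[of "L k"] by (simp add: eta_L)
  moreover have "\<exists>b. b \<noteq> 0 \<and> reflect_poly (L k) = smult b (L (\<sigma> k))"
    unfolding L_def
    by (rule reflect_lagrange_basis_inverse_nodes) (use x_inj x_nz \<sigma>_into \<sigma>_inverse k in auto)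
  ultimately show ?thesis
    unfolding eta_L \<sigma>_def[symmetric] by simp
qed

theorem lemma5:
  fixes \<beta> \<omega> :: "'a::{finite, field}"
    and l r :: nat
  assumes "l \<ge> 1"
    and "\<beta> = 1 \<or> \<beta> = -1"
    and "r > 0" and "\<beta> ^ r = 1" and "\<forall>m. 0 < m \<and> m < r \<longrightarrow> \<beta> ^ m \<noteq> 1"
    and "card (UNIV :: 'a set) mod (r * l) = 1 mod (r * l)"
    and "\<omega> ^ (r * l) = 1" and "\<forall>m. 0 < m \<and> m < r * l \<longrightarrow> \<omega> ^ m \<noteq> 1"
    and "\<omega> ^ l = \<beta>"
  shows "\<forall>k < l. \<exists>b. b \<noteq> 0 \<and>
           recip (l - 1) (eta \<omega> r l k) =
             (if \<beta> = 1 then smult b (eta \<omega> r l (idx_mod (int l - 2 - int k) l))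
              else smult b (eta \<omega> r l (idx_mod (int l - 1 - int k) l)))"
proof -
  have "r * (if \<beta> = 1 then 2 else 1) = 2"
  proof (cases "\<beta> = 1")
    case True
    then have "\<not> 1 < r"
      using assms(5) by auto
    with True assms(3) show ?thesis by simp
  next
    case False
    then have "\<not> 2 < r"
      using assms(2) assms(5)[rule_format, of 2] by auto
    moreover have "r \<noteq> 1"
      using assms(4) False by auto
    ultimately show ?thesis
      using False assms(3) by simp
  qed
  from recip_eta_eq_smult_eta[OF assms(1) this assms(7,8)] show ?thesis
    by (cases "\<beta> = 1") auto
qed

end
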